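(* Let $r$ be even with $2\le r\le n$, let $\mathbf{x}_1,\ldots,\mathbf{x}_r\in\mathbb{F}_2^n$ be linearly independent, and let $A\in\mathrm{SGL}_n(\mathbb{F}_2)$ satisfy $\mathbf{x}_i^{\top}A^{-1}\mathbf{x}_j=1$ for all $i,j\le r$. Then there exist $\mathbf{x}_{r+1}\in\mathbb{F}_2^n$ and $s\in\{1,\ldots,r\}$ such that $\mathbf{x}_s^{\top}A^{-1}\mathbf{x}_{r+1}=1$ and $\mathbf{x}_t^{\top}A^{-1}\mathbf{x}_{r+1}=0$ for all $t\in\{1,\ldots,r+1\}\setminus\{s\}$.
   Context: $\mathrm{SGL}_n(\mathbb{F}_2)$ is the set of invertible symmetric $n\times n$ matrices over the binary field $\mathbb{F}_2$. *)

theory Defs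
  imports "HOL-Analysis.Analysis" "HOL-Library.Z2"
begin

definition bilin :: "'a::comm_ring_1 ^ 'n \<Rightarrow> 'a ^ 'n ^ 'n \<Rightarrow> 'a ^ 'n \<Rightarrow> 'a" where
  "bilin x M y = (\<Sum>i\<in>UNIV. x $ i * ((M *v y) $ i))"

definition SGL :: "(bit ^ 'n ^ 'n) set" where
  "SGL = {A. invertible A \<and> transpose A = A}"

end

theory Submission
  imports Defs
begin

text \<open>Write B for the symmetric matrix A^-1 and u_i = B x_i, so that x_i^T B y = u_i . y.
  Over F_2 the quadratic form y \<mapsto> y^T B y is additive (the cross terms cancel by symmetry),
  hence equals d . y for the diagonal d of B; so we need a vector y dual to some u_s within
  {u_1, ..., u_r} that is also orthogonal to d. The u_i are independent. If d is not in their
  span, take y dual to u_1 within the independent set {d, u_1, ..., u_r}. Otherwise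
  d = \<Sum> a_i u_i, and not all a_i are 1: else d . x_1 = \<Sum> u_i . x_1 = r = 0 since r is even,
  while d . x_1 = x_1^T B x_1 = 1. For a_s = 0, the vector dual to u_s is orthogonal to d.\<close>

definition vec_dot :: "'a::comm_semiring_1 ^ 'n \<Rightarrow> 'a ^ 'n \<Rightarrow> 'a" where
  "vec_dot u v = (\<Sum>i\<in>UNIV. u $ i * v $ i)"

lemma vec_dot_commute: "vec_dot u v = vec_dot v u"
  by (simp add: vec_dot_def mult.commute)

lemma vec_dot_add_left: "vec_dot (u + w) v = vec_dot u v + vec_dot w v"
  by (simp add: vec_dot_def distrib_right sum.distrib)

lemma vec_dot_scale_left: "vec_dot (c *s u) v = c * vec_dot u v"
  by (simp add: vec_dot_def sum_distrib_left mult.assoc)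

lemma vec_dot_zero_left [simp]: "vec_dot 0 v = 0"
  by (simp add: vec_dot_def)

lemma vec_dot_sum_left:
  "vec_dot (\<Sum>i\<in>F. u i) v = (\<Sum>i\<in>F. vec_dot (u i) v)"
  by (induction F rule: infinite_finite_induct) (simp_all add: vec_dot_add_left)

lemma vec_dot_axis_left: "vec_dot (axis k 1) v = v $ k"
  by (simp add: vec_dot_def axis_def if_distrib[of "\<lambda>a. a * _"] cong: if_cong)

lemma vec_dot_matrix_vector_mult:
  "vec_dot u (M *v v) = vec_dot (transpose M *v u) v"
proof -
  have "vec_dot u (M *v v) = (\<Sum>i\<in>UNIV. \<Sum>j\<in>UNIV. u $ i * M $ i $ j * v $ j)"
    by (simp add: vec_dot_def matrix_vector_mult_def sum_distrib_left mult.assoc)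
  also have "\<dots> = (\<Sum>j\<in>UNIV. \<Sum>i\<in>UNIV. u $ i * M $ i $ j * v $ j)"
    by (rule sum.swap)
  also have "\<dots> = vec_dot (transpose M *v u) v"
    by (simp add: vec_dot_def matrix_vector_mult_def transpose_def
        sum_distrib_left sum_distrib_right mult_ac)
  finally show ?thesis .
qed

lemma bilin_eq_vec_dot: "bilin u M v = vec_dot u (M *v v)"
  by (simp add: bilin_def vec_dot_def)

lemma linear_functional_eq_vec_dot:
  fixes g :: "'a::field ^ 'n \<Rightarrow> 'a"
  assumes "Vector_Spaces.linear (*s) (*) g"
  shows "g w = vec_dot w (\<chi> k. g (axis k 1))"
proof -
  interpret g: Vector_Spaces.linear "(*s)" "(*)" g by fact
  have "g w = g (\<Sum>k\<in>UNIV. w $ k *s axis k 1)" by (simp add: basis_expansion)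
  also have "\<dots> = (\<Sum>k\<in>UNIV. w $ k * g (axis k 1))" by (simp add: g.sum g.scale)
  finally show ?thesis by (simp add: vec_dot_def)
qed

lemma linear_if_additive_bit:
  fixes g :: "bit ^ 'n \<Rightarrow> bit"
  assumes "\<And>u v. g (u + v) = g u + g v"
  shows "Vector_Spaces.linear (*s) (*) g"
proof -
  have "g 0 = 0" using assms[of 0 0] by simp
  then show ?thesis
  proof (unfold_locales, goal_cases)
    case (1 u v) show ?case by (fact assms)
  next
    case (2 c u) show ?case by (cases c) (simp_all add: \<open>g 0 = 0\<close>)
  qed
qed

lemma independent_dual_vector:
  fixes S :: "('a::field ^ 'n) set"
  assumes "vec.independent S" and "s \<in> S"
  shows "\<exists>y. vec_dot s y = 1 \<and> (\<forall>t\<in>S - {s}. vec_dot t y = 0)"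
proof -
  define B where "B = vec.extend_basis S"
  have B: "vec.independent B" "vec.span B = UNIV" "S \<subseteq> B"
    using assms(1) by (simp_all add: B_def vec.independent_extend_basis
        vec.span_extend_basis vec.extend_basis_superset)
  define g where "g v = vec.representation B v s" for v
  have "Vector_Spaces.linear (*s) (*) g"
    unfolding g_def using B by (intro vec.linear_representation)
  then have "g t = vec_dot t (\<chi> k. g (axis k 1))" for t
    by (rule linear_functional_eq_vec_dot)
  moreover have "g t = (if t = s then 1 else 0)" if "t \<in> S" for t
    using that B by (auto simp: g_def vec.representation_basis)
  ultimately show ?thesis
    using assms(2) by (metis DiffE singletonI)
qed

lemma matrix_inv_inverse:
  assumes "invertible A"
  shows "A ** matrix_inv A = mat 1" and "matrix_inv A ** A = mat 1"
  using someI_ex[OF assms[unfolded invertible_def]] by (simp_all add: matrix_inv_def)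

lemma invertible_matrix_inv: "invertible A \<Longrightarrow> invertible (matrix_inv A)"
  using matrix_inv_inverse invertible_def by blast

lemma matrix_inv_symmetric:
  fixes A :: "'a::comm_semiring_1 ^ 'n ^ 'n"
  assumes "invertible A" and "transpose A = A"
  shows "transpose (matrix_inv A) = matrix_inv A"
proof -
  let ?B = "matrix_inv A"
  have "transpose ?B ** A = mat 1"
    by (metis assms matrix_inv_inverse(1) matrix_transpose_mul transpose_mat)
  have "transpose ?B = transpose ?B ** (A ** ?B)"
    by (simp add: matrix_inv_inverse(1)[OF assms(1)])
  also have "\<dots> = ?B"
    by (simp add: matrix_mul_assoc \<open>transpose ?B ** A = mat 1\<close>)
  finally show ?thesis .
qed

lemma bilin_symmetric_eq_vec_dot:
  assumes "transpose M = M"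
  shows "bilin u M v = vec_dot (M *v u) v"
  by (metis assms bilin_eq_vec_dot vec_dot_commute vec_dot_matrix_vector_mult)

lemma bilin_commute:
  assumes "transpose M = M"
  shows "bilin u M v = bilin v M u"
  by (metis assms bilin_eq_vec_dot bilin_symmetric_eq_vec_dot vec_dot_commute)

lemma bilin_add_left: "bilin (u + w) M v = bilin u M v + bilin w M v"
  by (simp add: bilin_eq_vec_dot vec_dot_add_left)

lemma bilin_add_right: "bilin u M (v + w) = bilin u M v + bilin u M w"
  by (metis bilin_eq_vec_dot vec_dot_add_left vec_dot_commute matrix_vector_right_distrib)

lemma bilin_axis: "bilin (axis i 1) M (axis j 1) = M $ i $ j"
proof -
  have "(M *v axis j 1) $ i = vec_dot (axis j 1) (M $ i)"
    by (simp add: matrix_vector_mult_def vec_dot_def mult.commute)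
  then show ?thesis
    by (simp add: bilin_eq_vec_dot vec_dot_axis_left)
qed

lemma quadratic_form_bit_eq_vec_dot_diagonal:
  fixes M :: "bit ^ 'n ^ 'n"
  assumes "transpose M = M"
  shows "bilin v M v = vec_dot (\<chi> k. M $ k $ k) v"
proof -
  have "bilin (u + w) M (u + w) = bilin u M u + bilin w M w" for u w
  proof -
    have "bilin (u + w) M (u + w) = bilin u M u + bilin w M w + (bilin u M w + bilin w M u)"
      by (simp only: bilin_add_left bilin_add_right add_ac)
    also have "bilin u M w + bilin w M u = 0"
      using bilin_commute[OF assms, of u w] by (simp flip: mult_2)
    finally show ?thesis by simp
  qed
  then have "Vector_Spaces.linear (*s) (*) (\<lambda>v. bilin v M v)"
    by (rule linear_if_additive_bit)
  from linear_functional_eq_vec_dot[OF this] show ?thesis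
    by (simp add: bilin_axis vec_dot_commute)
qed

lemma independent_dual_vector_orthogonal:
  fixes U :: "(bit ^ 'n) set" and c w :: "bit ^ 'n"
  assumes indep: "vec.independent U" and "U \<noteq> {}" and "even (card U)"
    and w: "\<forall>v\<in>U. vec_dot v w = 1" and "vec_dot c w = 1"
  shows "\<exists>s\<in>U. \<exists>y. vec_dot s y = 1 \<and> (\<forall>t\<in>U - {s}. vec_dot t y = 0) \<and> vec_dot c y = 0"
proof (cases "c \<in> vec.span U")
  case False
  obtain s where "s \<in> U" using \<open>U \<noteq> {}\<close> by blast
  have "vec.independent (insert c U)"
    using False indep by (rule vec.independent_insertI)
  with \<open>s \<in> U\<close> obtain y where "vec_dot s y = 1" "\<forall>t\<in>insert c U - {s}. vec_dot t y = 0"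
    using independent_dual_vector by (metis insertCI)
  moreover have "c \<noteq> s"
    using False \<open>s \<in> U\<close> vec.span_base by blast
  ultimately show ?thesis
    using \<open>s \<in> U\<close> by blast
next
  case True
  have "finite U"
    using indep by (rule vec.finiteI_independent)
  with True obtain a where "c = (\<Sum>v\<in>U. a v *s v)"
    using vec.span_finite by blast
  then have dot_c: "vec_dot c y = (\<Sum>v\<in>U. a v * vec_dot v y)" for y
    by (simp add: vec_dot_sum_left vec_dot_scale_left)
  have "\<exists>s\<in>U. a s = 0"
  proof (rule ccontr)
    assume "\<not> (\<exists>s\<in>U. a s = 0)"
    then have "vec_dot c w = of_nat (card U)"
      by (simp add: dot_c w)
    also have "\<dots> = 0"
      using \<open>even (card U)\<close> by (auto elim: evenE)
    finally show False
      using \<open>vec_dot c w = 1\<close> by simp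
  qed
  then obtain s where "s \<in> U" "a s = 0" by blast
  with indep obtain y where y: "vec_dot s y = 1" "\<forall>t\<in>U - {s}. vec_dot t y = 0"
    using independent_dual_vector by blast
  have "a v * vec_dot v y = 0" if "v \<in> U" for v
    using that y(2) \<open>a s = 0\<close> by (cases "v = s") simp_all
  then have "vec_dot c y = 0"
    unfolding dot_c by (intro sum.neutral ballI)
  with y \<open>s \<in> U\<close> show ?thesis by blast
qed

lemma inj_family_dual_vector_orthogonal:
  fixes u :: "'i \<Rightarrow> bit ^ 'n" and c w :: "bit ^ 'n"
  assumes inj: "inj_on u I" and "vec.independent (u ` I)" and "I \<noteq> {}" and "even (card I)"
    and "\<forall>i\<in>I. vec_dot (u i) w = 1" and "vec_dot c w = 1"
  shows "\<exists>s\<in>I. \<exists>y. vec_dot (u s) y = 1 \<and> (\<forall>t\<in>I - {s}. vec_dot (u t) y = 0) \<and> vec_dot c y = 0"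
proof -
  have "u ` I \<noteq> {}" and "even (card (u ` I))"
    using assms(3,4) by (simp_all add: card_image[OF inj])
  with assms obtain s y where "s \<in> I" and y: "vec_dot (u s) y = 1"
    "\<forall>v\<in>u ` I - {u s}. vec_dot v y = 0" "vec_dot c y = 0"
    using independent_dual_vector_orthogonal[of "u ` I" w c] by auto
  have "u t \<in> u ` I - {u s}" if "t \<in> I - {s}" for t
    using that \<open>s \<in> I\<close> inj_on_eq_iff[OF inj] by blast
  with y \<open>s \<in> I\<close> show ?thesis by blast
qed

theorem lemma4p2:
  fixes r :: nat and x :: "nat \<Rightarrow> bit ^ 'n" and A :: "bit ^ 'n ^ 'n"
  assumes "even r" and "2 \<le> r" and "r \<le> CARD('n)"
    and "inj_on x {1..r}" and "vec.independent (x ` {1..r})"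
    and "A \<in> SGL"
    and "\<forall>i\<in>{1..r}. \<forall>j\<in>{1..r}. bilin (x i) (matrix_inv A) (x j) = 1"
  shows "\<exists>y :: bit ^ 'n. \<exists>s\<in>{1..r}.
           bilin (x s) (matrix_inv A) y = 1 \<and>
           (\<forall>t\<in>{1..r+1} - {s}. bilin ((x(r+1 := y)) t) (matrix_inv A) y = 0)"
proof -
  define B where "B = matrix_inv A"
  define u where "u i = B *v x i" for i
  have "invertible A" "transpose A = A"
    using assms(6) by (simp_all add: SGL_def)
  then have symm: "transpose B = B" and inj: "inj ((*v) B)"
    by (simp_all add: B_def matrix_inv_symmetric invertible_matrix_inv inj_matrix_vector_mult)
  have bilin_x: "bilin (x i) B y = vec_dot (u i) y" for i y
    by (simp add: u_def bilin_symmetric_eq_vec_dot symm)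
  have quad: "bilin y B y = vec_dot (\<chi> k. B $ k $ k) y" for y
    using symm by (rule quadratic_form_bit_eq_vec_dot_diagonal)
  have inj_u: "inj_on u {1..r}"
    using assms(4) inj unfolding inj_on_def inj_def u_def by blast
  have indep: "vec.independent (u ` {1..r})"
    using vec.independent_inj_image[OF assms(5) inj] by (simp add: u_def image_image)
  have one: "1 \<in> {1..r}"
    using assms(2) by simp
  have x1: "bilin (x i) B (x 1) = 1" if "i \<in> {1..r}" for i
    using assms(7) that one unfolding B_def by blast
  then have pair_one: "\<forall>i\<in>{1..r}. vec_dot (u i) (x 1) = 1"
    by (simp add: bilin_x)
  have diag_one: "vec_dot (\<chi> k. B $ k $ k) (x 1) = 1"
    using x1[OF one] by (simp add: quad)
  have nonempty: "{1..r} \<noteq> {}" and even: "even (card {1..r})"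
    using one assms(1) by auto
  obtain s y where s: "s \<in> {1..r}" and y: "vec_dot (u s) y = 1"
    "\<forall>t\<in>{1..r} - {s}. vec_dot (u t) y = 0" "vec_dot (\<chi> k. B $ k $ k) y = 0"
    using inj_family_dual_vector_orthogonal[OF inj_u indep nonempty even pair_one diag_one] by blast
  have orth: "bilin ((x(r+1 := y)) t) B y = 0" if "t \<in> {1..r+1} - {s}" for t
    using that y(2,3) by (cases "t = r + 1") (simp_all add: bilin_x quad)
  show ?thesis unfolding B_def[symmetric]
    by (intro exI[of _ y] bexI[OF _ s] conjI ballI orth) (simp add: bilin_x y(1))
qed

end
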